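(* For every fluent sentence $\alpha$ of ESG: $\models_{\mathrm{ESG}}\alpha$ iff $\models_{\text{t-ESG}}\alpha$.
   Context: The logic t-ESG. Sorts object, action, clock, time; standard names $\mathcal N_O,\mathcal N_A,\mathcal N_C$ (countably infinite) and time names $\mathbb Q_{\ge0}$; fluent and rigid function and predicate symbols (action- and clock-valued functions rigid); distinguished fluent predicates $\mathit{Poss}$, $\mathit{reset}$, $g$. Primitive terms/formulas: symbols applied to standard names. Situation formulas include $P(\vec t)$, $t_1=t_2$, clock comparisons $c\bowtie r$, $r\bowtie r'$ ($r,r'\in\mathbb Q_{\ge0}$), closed under $\wedge,\neg,\forall$ and the modal operators $\square,[\delta],[\![\delta]\!]$. A formula is static if it contains no $\square$, $[\cdot]$, $[\![\cdot]\!]$; it is fluent if it is static, contains no clock terms and does not mention $g$ or $\mathit{Poss}$. Timed traces are sequences $t_1p_1t_2p_2\cdots$ of non-decreasing reals $t_i\ge0$ alternating with action names. A t-ESG world maps (primitive term, finite timed trace) to a standard name of the right sort, (primitive formula, finite timed trace) to $\{0,1\}$ and (clock name, finite timed trace) to $\mathbb R_{\ge0}$, where rigid symbols are trace-independent, distinct primitive action terms (and clock terms) are mapped to distinct names, clocks start at $0$, advance with time and are set to $0$ by actions $p$ with $w[\mathit{reset}(c),z\cdot p]=1$. Denotation: $|n|^z_w=n$, $|f(t_1,\dots,t_k)|^z_w=w[f(|t_1|^z_w,\dots,|t_k|^z_w),z]$. For fluent sentences truth is: $w,z\models F(\vec t)$ iff $w[F(|\vec t|^z_w),z]=1$; $w,z\models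 t_1=t_2$ iff the denotations are identical; $r\bowtie r'$ iff true in $\mathbb Q$; Boolean connectives as usual; $w,z\models\forall x\alpha$ iff $w,z\models\alpha^x_n$ for all names $n$ of the sort of $x$. $w\models\alpha$ means $w,\langle\rangle\models\alpha$; $\models_{\text{t-ESG}}\alpha$ means $w\models\alpha$ for every t-ESG world. The logic ESG: its language consists of t-ESG formulas mentioning only object and action terms (no clock terms, no $g$, no $\mathit{reset}$, only unbounded until). ESG traces are sequences of action names; an ESG world maps (primitive object/action term, finite ESG trace) to standard names and (primitive formula, finite ESG trace) to $\{0,1\}$, with rigid symbols trace-independent and unique names for actions; truth of fluent sentences is defined by the same clauses; $\models_{\mathrm{ESG}}\alpha$ means $w,\langle\rangle\models\alpha$ for every ESG world $w$. *)

theory Defs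
  imports Complex_Main "HOL-Library.Countable"
begin

text \<open>Term sorts. Time is not a term sort here: time names are the rationals
  occurring in comparisons only.\<close>
datatype srt = Obj | Act | Clk

datatype stdname = N srt nat

fun sort_of_name :: "stdname \<Rightarrow> srt" where
  "sort_of_name (N s _) = s"

datatype 'f trm = Var srt nat | Nm stdname | App 'f "'f trm list"

datatype cmp = CLt | CLe | CEq | CGe | CGt

datatype ('f,'p) fm =
    Pred 'p "'f trm list"
  | Eqt "'f trm" "'f trm"
  | ClkCmp "'f trm" cmp rat
  | RatCmp rat cmp rat
  | Conj "('f,'p) fm" "('f,'p) fm"
  | Neg "('f,'p) fm"
  | All srt nat "('f,'p) fm"

record ('f,'p) sig =
  fres :: "'f \<Rightarrow> srt"
  fargs :: "'f \<Rightarrow> srt list"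
  frigid :: "'f \<Rightarrow> bool"
  pargs :: "'p \<Rightarrow> srt list"
  prigid :: "'p \<Rightarrow> bool"
  possP :: 'p
  resetP :: 'p
  gP :: 'p

definition wf_sig :: "('f,'p) sig \<Rightarrow> bool" where
  "wf_sig S \<longleftrightarrow>
     (\<forall>f. fres S f \<in> {Act, Clk} \<longrightarrow> frigid S f)
   \<and> \<not> prigid S (possP S) \<and> \<not> prigid S (resetP S) \<and> \<not> prigid S (gP S)
   \<and> distinct [possP S, resetP S, gP S]
   \<and> pargs S (possP S) = [Act] \<and> pargs S (resetP S) = [Clk]"

fun sort_of :: "('f,'p) sig \<Rightarrow> 'f trm \<Rightarrow> srt option" where
  "sort_of S (Var s _) = Some s"
| "sort_of S (Nm n) = Some (sort_of_name n)"
| "sort_of S (App f ts) =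
     (if map (sort_of S) ts = map Some (fargs S f) then Some (fres S f) else None)"

fun cmp_holds :: "cmp \<Rightarrow> 'a::linorder \<Rightarrow> 'a \<Rightarrow> bool" where
  "cmp_holds CLt a b = (a < b)"
| "cmp_holds CLe a b = (a \<le> b)"
| "cmp_holds CEq a b = (a = b)"
| "cmp_holds CGe a b = (a \<ge> b)"
| "cmp_holds CGt a b = (a > b)"

fun wf_fm :: "('f,'p) sig \<Rightarrow> ('f,'p) fm \<Rightarrow> bool" where
  "wf_fm S (Pred p ts) = (map (sort_of S) ts = map Some (pargs S p))"
| "wf_fm S (Eqt t1 t2) = (sort_of S t1 \<noteq> None \<and> sort_of S t1 = sort_of S t2)"
| "wf_fm S (ClkCmp c _ r) = (sort_of S c = Some Clk \<and> r \<ge> 0)"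
| "wf_fm S (RatCmp r _ r') = (r \<ge> 0 \<and> r' \<ge> 0)"
| "wf_fm S (Conj a b) = (wf_fm S a \<and> wf_fm S b)"
| "wf_fm S (Neg a) = wf_fm S a"
| "wf_fm S (All _ _ a) = wf_fm S a"

fun fvt :: "'f trm \<Rightarrow> (srt \<times> nat) set" where
  "fvt (Var s x) = {(s,x)}"
| "fvt (Nm _) = {}"
| "fvt (App f ts) = (\<Union>t\<in>set ts. fvt t)"

fun fvf :: "('f,'p) fm \<Rightarrow> (srt \<times> nat) set" where
  "fvf (Pred p ts) = (\<Union>t\<in>set ts. fvt t)"
| "fvf (Eqt t1 t2) = fvt t1 \<union> fvt t2"
| "fvf (ClkCmp c _ _) = fvt c"
| "fvf (RatCmp _ _ _) = {}"
| "fvf (Conj a b) = fvf a \<union> fvf b"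
| "fvf (Neg a) = fvf a"
| "fvf (All s x a) = fvf a - {(s,x)}"

fun noclk_t :: "('f,'p) sig \<Rightarrow> 'f trm \<Rightarrow> bool" where
  "noclk_t S (Var s _) = (s \<noteq> Clk)"
| "noclk_t S (Nm n) = (sort_of_name n \<noteq> Clk)"
| "noclk_t S (App f ts) = (fres S f \<noteq> Clk \<and> (\<forall>t\<in>set ts. noclk_t S t))"

fun esg_fluent :: "('f,'p) sig \<Rightarrow> ('f,'p) fm \<Rightarrow> bool" where
  "esg_fluent S (Pred p ts) =
     (p \<noteq> possP S \<and> p \<noteq> resetP S \<and> p \<noteq> gP S \<and> (\<forall>t\<in>set ts. noclk_t S t))"
| "esg_fluent S (Eqt t1 t2) = (noclk_t S t1 \<and> noclk_t S t2)"
| "esg_fluent S (ClkCmp _ _ _) = False"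
| "esg_fluent S (RatCmp _ _ _) = False"
| "esg_fluent S (Conj a b) = (esg_fluent S a \<and> esg_fluent S b)"
| "esg_fluent S (Neg a) = esg_fluent S a"
| "esg_fluent S (All s _ a) = (s \<noteq> Clk \<and> esg_fluent S a)"

definition esg_fluent_sentence :: "('f,'p) sig \<Rightarrow> ('f,'p) fm \<Rightarrow> bool" where
  "esg_fluent_sentence S \<alpha> \<longleftrightarrow> wf_fm S \<alpha> \<and> fvf \<alpha> = {} \<and> esg_fluent S \<alpha>"

fun substt :: "srt \<Rightarrow> nat \<Rightarrow> stdname \<Rightarrow> 'f trm \<Rightarrow> 'f trm" where
  "substt s x n (Var s' y) = (if s' = s \<and> y = x then Nm n else Var s' y)"
| "substt s x n (Nm m) = Nm m"
| "substt s x n (App f ts) = App f (map (substt s x n) ts)"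

fun substf :: "srt \<Rightarrow> nat \<Rightarrow> stdname \<Rightarrow> ('f,'p) fm \<Rightarrow> ('f,'p) fm" where
  "substf s x n (Pred p ts) = Pred p (map (substt s x n) ts)"
| "substf s x n (Eqt t1 t2) = Eqt (substt s x n t1) (substt s x n t2)"
| "substf s x n (ClkCmp c op r) = ClkCmp (substt s x n c) op r"
| "substf s x n (RatCmp r op r') = RatCmp r op r'"
| "substf s x n (Conj a b) = Conj (substf s x n a) (substf s x n b)"
| "substf s x n (Neg a) = Neg (substf s x n a)"
| "substf s x n (All s' y a) =
     (if s' = s \<and> y = x then All s' y a else All s' y (substf s x n a))"

fun fsz :: "('f,'p) fm \<Rightarrow> nat" where
  "fsz (Conj a b) = fsz a + fsz b + 1"
| "fsz (Neg a) = fsz a + 1"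
| "fsz (All _ _ a) = fsz a + 1"
| "fsz _ = 1"

lemma fsz_substf[simp]: "fsz (substf s x n a) = fsz a"
  by (induction a) auto

fun den :: "('f \<Rightarrow> stdname list \<Rightarrow> stdname) \<Rightarrow> 'f trm \<Rightarrow> stdname" where
  "den tv (Var s x) = undefined"
| "den tv (Nm n) = n"
| "den tv (App f ts) = tv f (map (den tv) ts)"

text \<open>Truth of static sentences at a fixed trace: tv, pv, cv are the world's
  values of primitive terms, primitive formulas and clock names at that trace.\<close>
function sat :: "('f \<Rightarrow> stdname list \<Rightarrow> stdname) \<Rightarrow> ('p \<Rightarrow> stdname list \<Rightarrow> bool)
                 \<Rightarrow> (stdname \<Rightarrow> real) \<Rightarrow> ('f,'p) fm \<Rightarrow> bool" where
  "sat tv pv cv (Pred p ts) = pv p (map (den tv) ts)"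
| "sat tv pv cv (Eqt t1 t2) = (den tv t1 = den tv t2)"
| "sat tv pv cv (ClkCmp c op r) = cmp_holds op (cv (den tv c)) (real_of_rat r)"
| "sat tv pv cv (RatCmp r op r') = cmp_holds op r r'"
| "sat tv pv cv (Conj a b) = (sat tv pv cv a \<and> sat tv pv cv b)"
| "sat tv pv cv (Neg a) = (\<not> sat tv pv cv a)"
| "sat tv pv cv (All s x a) = (\<forall>n. sat tv pv cv (substf s x (N s n) a))"
  by pat_completeness auto
termination
  by (relation "measure (\<lambda>(tv,pv,cv,a). fsz a)") auto

definition is_action_name :: "stdname \<Rightarrow> bool" where
  "is_action_name n \<longleftrightarrow> sort_of_name n = Act"

definition wsprim :: "('f,'p) sig \<Rightarrow> 'f \<Rightarrow> stdname list \<Rightarrow> bool" where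
  "wsprim S f ns \<longleftrightarrow> map sort_of_name ns = fargs S f"

definition etrace :: "stdname list \<Rightarrow> bool" where
  "etrace z \<longleftrightarrow> (\<forall>p\<in>set z. is_action_name p)"

type_synonym ttrace = "(real \<times> stdname) list"

definition ttrace :: "ttrace \<Rightarrow> bool" where
  "ttrace z \<longleftrightarrow> (\<forall>(t,p)\<in>set z. t \<ge> 0 \<and> is_action_name p) \<and> sorted (map fst z)"

definition last_time :: "ttrace \<Rightarrow> real" where
  "last_time z = (if z = [] then 0 else fst (last z))"

definition esg_world :: "('f,'p) sig \<Rightarrow> ('f \<Rightarrow> stdname list \<Rightarrow> stdname list \<Rightarrow> stdname)
     \<Rightarrow> ('p \<Rightarrow> stdname list \<Rightarrow> stdname list \<Rightarrow> bool) \<Rightarrow> bool" where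
  "esg_world S wt wp \<longleftrightarrow>
     (\<forall>f ns z. etrace z \<and> wsprim S f ns \<and> fres S f \<in> {Obj, Act}
        \<longrightarrow> sort_of_name (wt f ns z) = fres S f)
   \<and> (\<forall>f ns z z'. etrace z \<and> etrace z' \<and> wsprim S f ns \<and> fres S f \<in> {Obj, Act} \<and> frigid S f
        \<longrightarrow> wt f ns z = wt f ns z')
   \<and> (\<forall>p ns z z'. etrace z \<and> etrace z' \<and> prigid S p \<longrightarrow> wp p ns z = wp p ns z')
   \<and> (\<forall>f ns g ms z. etrace z \<and> wsprim S f ns \<and> wsprim S g ms \<and> fres S f = Act \<and> fres S g = Act
        \<and> (f, ns) \<noteq> (g, ms) \<longrightarrow> wt f ns z \<noteq> wt g ms z)"

definition tesg_world :: "('f,'p) sig \<Rightarrow> ('f \<Rightarrow> stdname list \<Rightarrow> ttrace \<Rightarrow> stdname)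
     \<Rightarrow> ('p \<Rightarrow> stdname list \<Rightarrow> ttrace \<Rightarrow> bool) \<Rightarrow> (stdname \<Rightarrow> ttrace \<Rightarrow> real) \<Rightarrow> bool" where
  "tesg_world S wt wp wc \<longleftrightarrow>
     (\<forall>f ns z. ttrace z \<and> wsprim S f ns \<longrightarrow> sort_of_name (wt f ns z) = fres S f)
   \<and> (\<forall>f ns z z'. ttrace z \<and> ttrace z' \<and> wsprim S f ns \<and> frigid S f
        \<longrightarrow> wt f ns z = wt f ns z')
   \<and> (\<forall>p ns z z'. ttrace z \<and> ttrace z' \<and> prigid S p \<longrightarrow> wp p ns z = wp p ns z')
   \<and> (\<forall>f ns g ms z. ttrace z \<and> wsprim S f ns \<and> wsprim S g ms \<and> fres S f = fres S g
        \<and> fres S f \<in> {Act, Clk} \<and> (f, ns) \<noteq> (g, ms) \<longrightarrow> wt f ns z \<noteq> wt g ms z)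
   \<and> (\<forall>c z. ttrace z \<and> sort_of_name c = Clk \<longrightarrow> wc c z \<ge> 0)
   \<and> (\<forall>c. sort_of_name c = Clk \<longrightarrow> wc c [] = 0)
   \<and> (\<forall>c z t p. ttrace (z @ [(t, p)]) \<and> sort_of_name c = Clk \<longrightarrow>
        wc c (z @ [(t, p)]) =
          (if wp (resetP S) [c] (z @ [(t, p)]) then 0 else wc c z + (t - last_time z)))"

definition esg_valid :: "('f,'p) sig \<Rightarrow> ('f,'p) fm \<Rightarrow> bool" where
  "esg_valid S \<alpha> \<longleftrightarrow>
     (\<forall>wt wp. esg_world S wt wp \<longrightarrow> sat (\<lambda>f ns. wt f ns []) (\<lambda>p ns. wp p ns []) (\<lambda>_. 0) \<alpha>)"

definition tesg_valid :: "('f,'p) sig \<Rightarrow> ('f,'p) fm \<Rightarrow> bool" where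
  "tesg_valid S \<alpha> \<longleftrightarrow>
     (\<forall>wt wp wc. tesg_world S wt wp wc \<longrightarrow>
        sat (\<lambda>f ns. wt f ns []) (\<lambda>p ns. wp p ns []) (\<lambda>c. wc c []) \<alpha>)"

end

theory Submission
  imports Defs
begin

text \<open>A fluent ESG sentence mentions no clock term, no time, and neither \<open>reset\<close>, \<open>Poss\<close> nor \<open>g\<close>;
  being evaluated at the empty trace, its truth depends only on the values of non-clock
  primitive terms and of the remaining primitive formulas at \<open>\<langle>\<rangle>\<close>. Every t-ESG world
  restricts at \<open>\<langle>\<rangle>\<close> to an ESG world. Conversely, an ESG world frozen at \<open>\<langle>\<rangle>\<close> becomes a
  t-ESG world once the countably many primitive clock terms are sent injectively to clock
  names and every action resets every clock, so that all clocks stay at \<open>0\<close>.\<close>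

instance srt :: countable by countable_datatype
instance stdname :: countable by countable_datatype

lemma den_cong_noclk:
  assumes "noclk_t S t" and "\<forall>f. fres S f \<noteq> Clk \<longrightarrow> tv f = tv' f"
  shows "den tv t = den tv' t"
  using assms by (induction t) (simp_all cong: map_cong)

lemma noclk_t_substt:
  "s \<noteq> Clk \<Longrightarrow> noclk_t S t \<Longrightarrow> noclk_t S (substt s x (N s n) t)"
  by (induction t) auto

lemma esg_fluent_substf:
  "s \<noteq> Clk \<Longrightarrow> esg_fluent S a \<Longrightarrow> esg_fluent S (substf s x (N s n) a)"
  by (induction a) (auto simp: noclk_t_substt)

lemma sat_cong_esg_fluent:
  assumes "esg_fluent S a"
    and "\<forall>f. fres S f \<noteq> Clk \<longrightarrow> tv f = tv' f"
    and "\<forall>p. p \<noteq> resetP S \<longrightarrow> pv p = pv' p"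
  shows "sat tv pv cv a = sat tv' pv' cv' a"
  using assms
proof (induction tv pv cv a rule: sat.induct)
  case (1 tv pv cv p ts)
  then have "map (den tv) ts = map (den tv') ts"
    by (auto intro!: map_cong den_cong_noclk)
  moreover have "pv p = pv' p"
    using 1 by simp
  ultimately show ?case by (simp only: sat.simps)
next
  case (2 tv pv cv t1 t2)
  then show ?case using den_cong_noclk[of S t1 tv tv'] den_cong_noclk[of S t2 tv tv'] by simp
next
  case (7 tv pv cv s x a)
  have "sat tv pv cv (substf s x (N s n) a) = sat tv' pv' cv' (substf s x (N s n) a)" for n
    using 7 esg_fluent_substf[of s S a x n] by simp
  then show ?case by simp
qed auto

lemma esg_world_at_empty_trace:
  assumes "tesg_world S wt wp wc"
  shows "esg_world S (\<lambda>f ns _. wt f ns []) (\<lambda>p ns _. wp p ns [])"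
proof -
  have empty: "ttrace []" by (simp add: ttrace_def)
  have sorts: "sort_of_name (wt f ns []) = fres S f" if "wsprim S f ns" for f ns
    using assms empty that by (simp add: tesg_world_def)
  have distinct: "wt f ns [] \<noteq> wt g ms []"
    if "wsprim S f ns" "wsprim S g ms" "fres S f = Act" "fres S g = Act" "(f, ns) \<noteq> (g, ms)"
    for f ns g ms
    using assms empty that by (simp add: tesg_world_def)
  show ?thesis
    unfolding esg_world_def by (intro conjI allI impI sorts distinct) auto
qed

definition clocks_named_apart ::
    "('f::countable, 'p) sig \<Rightarrow> ('f \<Rightarrow> stdname list \<Rightarrow> stdname list \<Rightarrow> stdname)
     \<Rightarrow> 'f \<Rightarrow> stdname list \<Rightarrow> ttrace \<Rightarrow> stdname" where
  "clocks_named_apart S wt f ns z =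
     (if fres S f = Clk then N Clk (to_nat (f, ns)) else wt f ns [])"

lemma tesg_world_clocks_named_apart:
  assumes "esg_world S wt wp"
  shows "tesg_world S (clocks_named_apart S wt) (\<lambda>p ns _. p = resetP S \<or> wp p ns []) (\<lambda>_ _. 0)"
proof -
  have empty: "etrace []" by (simp add: etrace_def)
  have esg_sorts: "sort_of_name (wt f ns []) = fres S f"
    if "wsprim S f ns" "fres S f \<in> {Obj, Act}" for f ns
    using assms empty that unfolding esg_world_def by blast
  have esg_actions_distinct: "wt f ns [] \<noteq> wt g ms []"
    if "wsprim S f ns" "wsprim S g ms" "fres S f = Act" "fres S g = Act" "(f, ns) \<noteq> (g, ms)"
    for f ns g ms
    using assms empty that unfolding esg_world_def by blast
  have sorts: "sort_of_name (clocks_named_apart S wt f ns z) = fres S f"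
    if "wsprim S f ns" for f ns z
    using esg_sorts[OF that] by (cases "fres S f") (simp_all add: clocks_named_apart_def)
  have distinct: "clocks_named_apart S wt f ns z \<noteq> clocks_named_apart S wt g ms z"
    if "wsprim S f ns" "wsprim S g ms" "fres S f = fres S g" "fres S f \<in> {Act, Clk}"
      "(f, ns) \<noteq> (g, ms)" for f ns g ms z
    using that esg_actions_distinct[of f ns g ms] by (auto simp: clocks_named_apart_def)
  show ?thesis
    unfolding tesg_world_def
    by (intro conjI allI impI sorts distinct) (auto simp: clocks_named_apart_def)
qed

lemma tesg_valid_imp_esg_valid:
  fixes S :: "('f::countable, 'p) sig"
  assumes "esg_fluent S \<alpha>" and "tesg_valid S \<alpha>"
  shows "esg_valid S \<alpha>"
  unfolding esg_valid_def
proof (intro allI impI)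
  fix wt wp assume "esg_world S wt wp"
  then have "sat (\<lambda>f ns. clocks_named_apart S wt f ns []) (\<lambda>p ns. p = resetP S \<or> wp p ns [])
      (\<lambda>_. 0) \<alpha>"
    using assms(2) tesg_world_clocks_named_apart unfolding tesg_valid_def by fastforce
  moreover have "sat (\<lambda>f ns. clocks_named_apart S wt f ns []) (\<lambda>p ns. p = resetP S \<or> wp p ns [])
      (\<lambda>_. 0) \<alpha> = sat (\<lambda>f ns. wt f ns []) (\<lambda>p ns. wp p ns []) (\<lambda>_. 0) \<alpha>"
    by (rule sat_cong_esg_fluent[OF assms(1)]) (simp_all add: clocks_named_apart_def)
  ultimately show "sat (\<lambda>f ns. wt f ns []) (\<lambda>p ns. wp p ns []) (\<lambda>_. 0) \<alpha>"
    by simp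
qed

lemma esg_valid_imp_tesg_valid:
  assumes "esg_fluent S \<alpha>" and "esg_valid S \<alpha>"
  shows "tesg_valid S \<alpha>"
  unfolding tesg_valid_def
proof (intro allI impI)
  fix wt wp wc assume "tesg_world S wt wp wc"
  then have "sat (\<lambda>f ns. wt f ns []) (\<lambda>p ns. wp p ns []) (\<lambda>_. 0) \<alpha>"
    using assms(2) esg_world_at_empty_trace unfolding esg_valid_def by fastforce
  then show "sat (\<lambda>f ns. wt f ns []) (\<lambda>p ns. wp p ns []) (\<lambda>c. wc c []) \<alpha>"
    using sat_cong_esg_fluent[OF assms(1)] by blast
qed

theorem mainTheorem4:
  fixes S :: "('f::countable, 'p) sig" and \<alpha> :: "('f,'p) fm"
  assumes "wf_sig S"
    and "esg_fluent_sentence S \<alpha>"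
  shows "esg_valid S \<alpha> \<longleftrightarrow> tesg_valid S \<alpha>"
proof -
  have "esg_fluent S \<alpha>"
    using assms(2) by (simp add: esg_fluent_sentence_def)
  then show ?thesis
    using esg_valid_imp_tesg_valid tesg_valid_imp_esg_valid by blast
qed

end
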